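(* Let $S$ be a smooth projective surface with $b_1(S)=0$, $p_g(S)>0$, let $\pi:\widetilde S\to S$ be the blow-up at one point with exceptional divisor $E$, let $c_1\in H^2(S,\mathbb{Z})$, $\ell\in\{0,1,2\}$, and $\widetilde c_1=\pi^*c_1-\ell E$. Let $\mathrm{SW}$ be the Seiberg–Witten invariants of $S$ and define those of $\widetilde S$ by $\widetilde{\mathrm{SW}}(\pi^*a)=\widetilde{\mathrm{SW}}(\pi^*a+E)=\mathrm{SW}(a)$ for $a\in H^2(S,\mathbb{Z})$, and $\widetilde{\mathrm{SW}}=0$ on all other classes. With $\mathsf{Z}^{\mathrm{inst}}$ defined as in the context (using $\widetilde{\mathrm{SW}}$, $K_{\widetilde S}=\pi^*K_S+E$, $\chi(\mathcal{O}_{\widetilde S})=\chi(\mathcal{O}_S)$ for $\widetilde S$), one has $$\mathsf{Z}^{\mathrm{inst}}_{\widetilde S,\widetilde c_1}(x,y)=\begin{cases}\dfrac{\Theta_{A_2,(0,0)}(x^3,y)}{\overline\eta(x^6)^3}\,\mathsf{Z}^{\mathrm{inst}}_{S,c_1}(x,y),&\ell=0,\\[2ex]\dfrac{\Theta_{A_2,(1,0)}(x^3,y)}{\overline\eta(x^6)^3}\,\mathsf{Z}^{\mathrm{inst}}_{S,c_1}(x,y),&\ell=1,2.\end{cases}$$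
   Context: $\epsilon=e^{2\pi i/3}$. For a surface $X$ with invariants $\chi=\chi(\mathcal{O}_X)$, canonical class $K$, Seiberg–Witten function $\mathrm{SW}$ (finitely supported on $H^2(X,\mathbb{Z})$), and $c\in H^2(X,\mathbb{Z})$, define $\psi_{X,c}(x,y):=9\Big(\frac{1}{3\prod_{n\ge1}(1-x^{2n})^{10}(1-x^{2n}y)(1-x^{2n}y^{-1})}\Big)^{\chi}\Big(\frac{\Theta_{A_2^\vee,(0,1)}(x,y)}{3\overline{\eta}(x^6)^3}\Big)^{-K^2}\sum_{a,b\in H^2(X,\mathbb{Z})}\mathrm{SW}(a)\mathrm{SW}(b)\epsilon^{(a-b)c}Z_+(x,y)^{ab}Z_-(x,y)^{(K-a)(K-b)}$, and writing $\psi_{X,c}=\sum_n\psi_n(y)x^n$, set $\mathsf{Z}^{\mathrm{inst}}_{X,c}(x,y):=\sum_{n\equiv-2c^2-8\chi\ (\mathrm{mod}\ 3)}\psi_n(y)x^n=\frac13\sum_{k=0}^2\epsilon^{k(2c^2+8\chi)}\psi_{X,c}(\epsilon^kx,y)$. Here $\overline\eta(x)=\prod_{n\ge1}(1-x^n)$; $\Theta_{A_2,(0,0)}(x,y)=\sum_{(m,n)\in\mathbb{Z}^2}x^{2(m^2-mn+n^2)}y^{m+n}$, $\Theta_{A_2,(1,0)}(x,y)=\sum_{(m,n)}x^{2(m^2-mn+n^2+m-n+\frac13)}y^{m+n}$, $\Theta_{A_2^\vee,(0,0)}(x,y)=\sum_{(m,n)}x^{2(m^2+mn+n^2)}y^{m+n}$,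 $\Theta_{A_2^\vee,(0,1)}(x,y)=\sum_{(m,n)}\epsilon^{m-n}x^{2(m^2+mn+n^2)}y^{m+n}$; $Z=\Theta_{A_2^\vee,(0,0)}/\Theta_{A_2^\vee,(0,1)}$ and $Z_\pm(x,y)$ are the two roots in $\zeta$ of $\zeta^2-(Z(x,y)^2+3Z(x,y)Z(x,1))\zeta+Z(x,y)+3Z(x,1)=0$. (Under the paper's Conjecture 1, $\mathsf{Z}^{\mathrm{inst}}_{X,c}(x,y)=\sum_{c_2}\overline\chi^{\mathrm{vir}}_{-y}(M_X^H(3,c,c_2))x^{\mathrm{vd}}$.) *)

theory Defs
  imports "HOL-Analysis.Analysis"
begin

text \<open>All generating functions are modelled as complex-valued functions of complex
  variables x, y (x near 0, y nonzero); the formal-series identity of the paper is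
  rendered as an identity of these functions on a neighbourhood of x = 0, for every y.\<close>

definition eps :: complex where
  "eps = exp (2 * pi * \<i> / 3)"

definition etabar :: "complex \<Rightarrow> complex" where
  "etabar x = prodinf (\<lambda>n. 1 - x ^ (n + 1))"

definition theta_A2_00 :: "complex \<Rightarrow> complex \<Rightarrow> complex" where
  "theta_A2_00 x y = infsum (\<lambda>(m::int, n::int).
      x ^ nat (2 * (m^2 - m*n + n^2)) * y powi (m + n)) UNIV"

text \<open>Theta_{A2,(1,0)}(x^3,y) = sum over (m,n) of x^(6(m^2-mn+n^2+m-n+1/3)) y^(m+n)
  = sum of x^(6(m^2-mn+n^2+m-n)+2) y^(m+n) (the exponent is a nonnegative integer).
  Only the evaluation at x^3 occurs in the theorem, so we define that function directly.\<close>
definition theta_A2_10_cube :: "complex \<Rightarrow> complex \<Rightarrow> complex" where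
  "theta_A2_10_cube x y = infsum (\<lambda>(m::int, n::int).
      x ^ nat (6 * (m^2 - m*n + n^2 + m - n) + 2) * y powi (m + n)) UNIV"

definition theta_A2d_00 :: "complex \<Rightarrow> complex \<Rightarrow> complex" where
  "theta_A2d_00 x y = infsum (\<lambda>(m::int, n::int).
      x ^ nat (2 * (m^2 + m*n + n^2)) * y powi (m + n)) UNIV"

definition theta_A2d_01 :: "complex \<Rightarrow> complex \<Rightarrow> complex" where
  "theta_A2d_01 x y = infsum (\<lambda>(m::int, n::int).
      eps powi (m - n) * x ^ nat (2 * (m^2 + m*n + n^2)) * y powi (m + n)) UNIV"

definition Zfun :: "complex \<Rightarrow> complex \<Rightarrow> complex" where
  "Zfun x y = theta_A2d_00 x y / theta_A2d_01 x y"

text \<open>Zp, Zm are the two roots in zeta of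
  zeta^2 - (Z(x,y)^2 + 3 Z(x,y) Z(x,1)) zeta + Z(x,y) + 3 Z(x,1) = 0, at every point.\<close>
definition roots_Zpm :: "(complex \<Rightarrow> complex \<Rightarrow> complex) \<Rightarrow> (complex \<Rightarrow> complex \<Rightarrow> complex) \<Rightarrow> bool" where
  "roots_Zpm Zp Zm \<longleftrightarrow> (\<forall>x y.
      Zp x y + Zm x y = (Zfun x y)^2 + 3 * Zfun x y * Zfun x 1 \<and>
      Zp x y * Zm x y = Zfun x y + 3 * Zfun x 1)"

definition pref_chi :: "complex \<Rightarrow> complex \<Rightarrow> complex" where
  "pref_chi x y = 1 / (3 * prodinf (\<lambda>n. (1 - x ^ (2 * (n + 1))) ^ 10
        * (1 - x ^ (2 * (n + 1)) * y) * (1 - x ^ (2 * (n + 1)) * inverse y)))"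

text \<open>Lattice data of a surface: H^2(X,Z) is the type 'a, the intersection form is B,
  canonical class K, chi = chi(O_X), Seiberg-Witten function SW (finitely supported).\<close>
definition intersection_form :: "('a::ab_group_add \<Rightarrow> 'a \<Rightarrow> int) \<Rightarrow> bool" where
  "intersection_form B \<longleftrightarrow> (\<forall>a b. B a b = B b a) \<and>
      (\<forall>a b c. B (a + b) c = B a c + B b c)"

definition psi :: "('a::ab_group_add \<Rightarrow> 'a \<Rightarrow> int) \<Rightarrow> 'a \<Rightarrow> int \<Rightarrow> ('a \<Rightarrow> int)
    \<Rightarrow> (complex \<Rightarrow> complex \<Rightarrow> complex) \<Rightarrow> (complex \<Rightarrow> complex \<Rightarrow> complex)
    \<Rightarrow> 'a \<Rightarrow> complex \<Rightarrow> complex \<Rightarrow> complex" where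
  "psi B K chi SW Zp Zm c x y =
     9 * (pref_chi x y) powi chi
       * (theta_A2d_01 x y / (3 * (etabar (x ^ 6)) ^ 3)) powi (- B K K)
       * (\<Sum>a\<in>{a. SW a \<noteq> 0}. \<Sum>b\<in>{b. SW b \<noteq> 0}.
            of_int (SW a * SW b) * eps powi (B (a - b) c)
            * (Zp x y) powi (B a b) * (Zm x y) powi (B (K - a) (K - b)))"

definition Zinst :: "('a::ab_group_add \<Rightarrow> 'a \<Rightarrow> int) \<Rightarrow> 'a \<Rightarrow> int \<Rightarrow> ('a \<Rightarrow> int)
    \<Rightarrow> (complex \<Rightarrow> complex \<Rightarrow> complex) \<Rightarrow> (complex \<Rightarrow> complex \<Rightarrow> complex)
    \<Rightarrow> 'a \<Rightarrow> complex \<Rightarrow> complex \<Rightarrow> complex" where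
  "Zinst B K chi SW Zp Zm c x y =
     (1 / 3) * (\<Sum>k<(3::nat). eps powi (int k * (2 * B c c + 8 * chi))
                  * psi B K chi SW Zp Zm c (eps ^ k * x) y)"

text \<open>Blow-up at a point: H^2(S~,Z) = H^2(S,Z) + Z E, with pi^*a = (a,0), E = (0,1),
  pi^*a . pi^*b = a.b, pi^*a . E = 0, E . E = -1.\<close>
definition blowup_form :: "('a \<Rightarrow> 'a \<Rightarrow> int) \<Rightarrow> ('a \<times> int) \<Rightarrow> ('a \<times> int) \<Rightarrow> int" where
  "blowup_form B u v = B (fst u) (fst v) - snd u * snd v"

definition blowup_SW :: "('a \<Rightarrow> int) \<Rightarrow> ('a \<times> int) \<Rightarrow> int" where
  "blowup_SW SW u = (if snd u = 0 \<or> snd u = 1 then SW (fst u) else 0)"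

end

theory Submission
  imports Defs
begin

text \<open>On the blow-up the classes with nonzero invariant are pi^*a and pi^*a + E, and
  pi^*a . E = 0, E . E = -1, so the double sum in psi for the blow-up factors as the one for S
  times 1/Z_+ + 1/Z_- + eps^l + eps^(-l); the extra power of the Theta_{A2 dual,(0,1)}/eta^3 factor
  comes from K^2 dropping by one. By Vieta 1/Z_+ + 1/Z_- = Z, so the correction becomes
  (Theta_(0,0) + (eps^l + eps^(-l)) Theta_(0,1)) / (3 eta^3) in terms of the A2 dual theta series.
  Averaging over the characters of Z/3 turns this combination into three times the theta series of
  the coset m - n = 0 resp. 2 (mod 3) of the index 3 sublattice, which is Theta_{A2,(0,0)}(x^3)
  resp. Theta_{A2,(1,0)}(x^3). These are invariant resp. multiplied by eps^(2k) under
  x \<mapsto> eps^k x, compatibly with the projection defining Zinst.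

  All series are treated as absolutely convergent sums for small x; there the theta series are
  close to 1, which keeps every denominator away from zero.\<close>

lemma eps_cube: "eps ^ 3 = 1"
proof -
  have "eps ^ 3 = exp (of_nat 3 * (2 * pi * \<i> / 3))"
    unfolding eps_def by (rule exp_of_nat_mult[symmetric])
  also have "of_nat 3 * (2 * pi * \<i> / 3) = 2 * pi * \<i>" by simp
  finally show ?thesis by simp
qed

lemma eps_nonzero [simp]: "eps \<noteq> 0"
  by (simp add: eps_def)

lemma norm_eps [simp]: "norm eps = 1"
  by (simp add: eps_def norm_exp_eq_Re)

lemma norm_eps_powi [simp]: "norm (eps powi j) = 1"
  by (simp add: norm_power_int)

lemma eps_neq_1: "eps \<noteq> 1"
proof
  assume "eps = 1"
  then obtain k :: int where "3 * real_of_int k = 1"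
    unfolding eps_def exp_eq_1 by auto
  hence "3 * k = 1" by linarith
  thus False by presburger
qed

lemma eps_powi_mod3: "eps powi j = eps ^ nat (j mod 3)"
proof -
  have "eps powi j = eps powi (3 * (j div 3)) * eps powi (j mod 3)"
    by (simp add: power_int_add[symmetric])
  also have "eps powi (3 * (j div 3)) = 1"
    by (simp add: power_int_mult eps_cube)
  finally show ?thesis
    by (simp add: power_int_def)
qed

lemma eps_powi_cong: "j mod 3 = j' mod 3 \<Longrightarrow> eps powi j = eps powi j'"
  by (simp add: eps_powi_mod3)

lemma one_plus_eps_plus_eps2: "1 + eps + eps ^ 2 = 0"
proof -
  have "(eps - 1) * (1 + eps + eps ^ 2) = eps ^ 3 - 1"
    by (simp add: algebra_simps power2_eq_square power3_eq_cube)
  thus ?thesis using eps_neq_1 by (simp add: eps_cube)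
qed

lemma eps_character_sum: "1 + eps powi j + eps powi (- j) = (if j mod 3 = 0 then 3 else 0)"
proof -
  have "j mod 3 = 0 \<and> (- j) mod 3 = 0 \<or> j mod 3 = 1 \<and> (- j) mod 3 = 2
    \<or> j mod 3 = 2 \<and> (- j) mod 3 = 1"
    by presburger
  then show ?thesis
    using one_plus_eps_plus_eps2 by (auto simp: eps_powi_mod3 algebra_simps)
qed

lemma eps_powi_add_uminus: "j mod 3 \<noteq> 0 \<Longrightarrow> eps powi j + eps powi (- j) = -1"
  using eps_character_sum[of j] by (simp add: eq_neg_iff_add_eq_0 add.commute add.left_commute)

lemma summable_on_int_geometric:
  fixes c :: real
  assumes "0 \<le> c" "c < 1"
  shows "(\<lambda>m::int. c ^ nat \<bar>m\<bar>) summable_on UNIV"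
proof -
  have geom: "(\<lambda>n::nat. c ^ n) summable_on UNIV"
    using assms by (intro norm_summable_imp_summable_on) (simp add: summable_geometric)
  have "(\<lambda>m::int. c ^ nat \<bar>m\<bar>) summable_on range int"
    by (subst summable_on_reindex) (simp_all add: o_def geom)
  moreover have "(\<lambda>m::int. c ^ nat \<bar>m\<bar>) summable_on range (\<lambda>n. - int n)"
    by (subst summable_on_reindex) (simp_all add: inj_on_def o_def geom)
  ultimately have "(\<lambda>m::int. c ^ nat \<bar>m\<bar>) summable_on (range int \<union> range (\<lambda>n. - int n))"
    by (rule summable_on_union)
  also have "range int \<union> range (\<lambda>n. - int n) = UNIV"
  proof (intro set_eqI iffI)
    fix m :: int
    show "m \<in> range int \<union> range (\<lambda>n. - int n)"
      by (cases "0 \<le> m") (auto intro: image_eqI[of _ _ "nat m"] image_eqI[of _ _ "nat (- m)"])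
  qed simp
  finally show ?thesis .
qed

definition geometric_Z2 :: "int \<times> int \<Rightarrow> real" where
  "geometric_Z2 = (\<lambda>(m, n). (1/2) ^ (nat \<bar>m\<bar> + nat \<bar>n\<bar>))"

lemma geometric_Z2_summable: "geometric_Z2 summable_on UNIV"
proof -
  let ?h = "\<lambda>m::int. (1/2::real) ^ nat \<bar>m\<bar>"
  have h: "?h summable_on UNIV"
    by (rule summable_on_int_geometric) auto
  have "(\<lambda>p. ?h (fst p) * ?h (snd p)) summable_on Sigma UNIV (\<lambda>_. UNIV)"
  proof (rule summable_on_SigmaI)
    fix m :: int
    show "((\<lambda>n. ?h (fst (m, n)) * ?h (snd (m, n))) has_sum (?h m * infsum ?h UNIV)) UNIV"
      using has_sum_cmult_right[OF has_sum_infsum[OF h]] by simp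
    show "(\<lambda>m. ?h m * infsum ?h UNIV) summable_on UNIV"
      using summable_on_cmult_left[OF h] by simp
  qed auto
  thus ?thesis
    by (simp add: geometric_Z2_def case_prod_unfold power_add)
qed

definition qform_A2d :: "int \<Rightarrow> int \<Rightarrow> int" where
  "qform_A2d m n = m\<^sup>2 + m * n + n\<^sup>2"

lemma qform_A2d_nonneg: "0 \<le> qform_A2d m n"
proof -
  have "0 \<le> m\<^sup>2 + n\<^sup>2 + (m + n)\<^sup>2" by simp
  thus ?thesis unfolding qform_A2d_def by (simp add: power2_eq_square algebra_simps)
qed

lemma abs_add_abs_le_qform_A2d: "\<bar>m\<bar> + \<bar>n\<bar> \<le> 2 * qform_A2d m n"
proof -
  have abs_le_sq: "\<bar>k\<bar> \<le> k\<^sup>2" for k :: int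
  proof (cases "k = 0")
    case False
    hence "\<bar>k\<bar> * 1 \<le> \<bar>k\<bar> * \<bar>k\<bar>" by (intro mult_left_mono) auto
    thus ?thesis by (simp add: power2_eq_square)
  qed simp
  have "2 * qform_A2d m n = m\<^sup>2 + n\<^sup>2 + (m + n)\<^sup>2"
    by (simp add: qform_A2d_def power2_eq_square algebra_simps)
  moreover have "0 \<le> (m + n)\<^sup>2" by simp
  ultimately show ?thesis
    using abs_le_sq[of m] abs_le_sq[of n] by linarith
qed

definition theta_term :: "(int \<Rightarrow> int \<Rightarrow> complex) \<Rightarrow> complex \<Rightarrow> complex \<Rightarrow> int \<times> int \<Rightarrow> complex" where
  "theta_term w x y = (\<lambda>(m, n). w m n * x ^ nat (2 * qform_A2d m n) * y powi (m + n))"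

lemma theta_A2d_00_eq: "theta_A2d_00 x y = infsum (theta_term (\<lambda>_ _. 1) x y) UNIV"
  unfolding theta_A2d_00_def theta_term_def qform_A2d_def by (simp add: case_prod_unfold)

lemma theta_A2d_01_eq: "theta_A2d_01 x y = infsum (theta_term (\<lambda>m n. eps powi (m - n)) x y) UNIV"
  unfolding theta_A2d_01_def theta_term_def qform_A2d_def by (simp add: case_prod_unfold)

lemma theta_A2d_01_swap: "infsum (theta_term (\<lambda>m n. eps powi (n - m)) x y) UNIV = theta_A2d_01 x y"
  unfolding theta_A2d_01_eq
proof (rule infsum_reindex_bij_witness[of UNIV prod.swap prod.swap])
  fix p :: "int \<times> int"
  show "theta_term (\<lambda>m n. eps powi (m - n)) x y (prod.swap p) = theta_term (\<lambda>m n. eps powi (n - m)) x y p"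
    by (cases p) (simp add: theta_term_def qform_A2d_def algebra_simps)
qed auto

lemma theta_term_summable_weighted:
  assumes "theta_term (\<lambda>_ _. 1) x y summable_on A" and "\<And>m n. norm (w m n) \<le> 1"
  shows "theta_term w x y summable_on A"
proof -
  have "(\<lambda>p. norm (theta_term (\<lambda>_ _. 1) x y p)) summable_on A"
    using assms(1) summable_on_iff_abs_summable_on_complex by blast
  hence "(\<lambda>p. norm (theta_term w x y p)) summable_on A"
  proof (rule Infinite_Sum.abs_summable_on_comparison_test)
    fix p :: "int \<times> int"
    show "norm (theta_term w x y p) \<le> norm (theta_term (\<lambda>_ _. 1) x y p)"
      using assms(2) by (cases p) (auto simp: theta_term_def norm_mult mult.assoc intro!: mult_left_le_one_le)
  qed
  thus ?thesis
    using summable_on_iff_abs_summable_on_complex by blast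
qed

lemma norm_power_int_le:
  fixes y :: complex
  assumes "y \<noteq> 0" "norm y \<le> s" "1 / norm y \<le> s"
  shows "norm (y powi j) \<le> s ^ nat \<bar>j\<bar>"
proof (cases "0 \<le> j")
  case True
  hence "norm (y powi j) = norm y ^ nat \<bar>j\<bar>"
    by (simp add: power_int_def norm_power)
  also have "\<dots> \<le> s ^ nat \<bar>j\<bar>"
    using assms by (intro power_mono) auto
  finally show ?thesis .
next
  case False
  hence "norm (y powi j) = (1 / norm y) ^ nat \<bar>j\<bar>"
    by (simp add: power_int_def norm_power norm_inverse power_inverse divide_inverse)
  also have "\<dots> \<le> s ^ nat \<bar>j\<bar>"
    using assms by (intro power_mono) auto
  finally show ?thesis .
qed

lemma one_le_of_norm_bounds:
  fixes y :: complex
  assumes "y \<noteq> 0" "norm y \<le> s" "1 / norm y \<le> s"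
  shows "1 \<le> s"
proof (cases "norm y < 1")
  case True
  hence "1 < 1 / norm y" using assms(1) by (simp add: field_simps)
  thus ?thesis using assms(3) by linarith
qed (use assms(2) in linarith)

lemma norm_theta_term_le:
  assumes y: "y \<noteq> 0" "norm y \<le> s" "1 / norm y \<le> s"
    and xs: "norm x * s \<le> 1" and w: "norm (w m n) \<le> 1"
  shows "norm (theta_term w x y (m, n)) \<le> (norm x * s) ^ (nat \<bar>m\<bar> + nat \<bar>n\<bar>)"
proof -
  let ?N = "nat \<bar>m\<bar> + nat \<bar>n\<bar>"
  have s1: "1 \<le> s"
    using y by (rule one_le_of_norm_bounds)
  have "norm x \<le> norm x * s"
    using s1 by (simp add: mult_le_cancel_left1)
  hence x1: "norm x \<le> 1" using xs by linarith
  have "norm x ^ nat (2 * qform_A2d m n) \<le> norm x ^ ?N"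
    using x1 abs_add_abs_le_qform_A2d[of m n] by (intro power_decreasing) auto
  moreover have "norm (y powi (m + n)) \<le> s ^ ?N"
  proof -
    have "norm (y powi (m + n)) \<le> s ^ nat \<bar>m + n\<bar>"
      by (rule norm_power_int_le[OF y])
    also have "\<dots> \<le> s ^ ?N"
      using s1 by (intro power_increasing) auto
    finally show ?thesis .
  qed
  ultimately have "norm (w m n) * norm x ^ nat (2 * qform_A2d m n) * norm (y powi (m + n))
      \<le> 1 * norm x ^ ?N * s ^ ?N"
    using w by (intro mult_mono) auto
  thus ?thesis
    by (simp add: theta_term_def norm_mult norm_power power_mult_distrib)
qed

lemma theta_term_summable:
  assumes "y \<noteq> 0" "norm y \<le> s" "1 / norm y \<le> s" and "norm x * s \<le> 1/2"
  shows "theta_term (\<lambda>_ _. 1) x y summable_on UNIV"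
proof -
  have "(\<lambda>p. norm (theta_term (\<lambda>_ _. 1) x y p)) summable_on UNIV"
  proof (rule Infinite_Sum.abs_summable_on_comparison_test)
    show "(\<lambda>p. norm (geometric_Z2 p)) summable_on UNIV"
      using geometric_Z2_summable by (simp add: geometric_Z2_def case_prod_unfold)
    fix p :: "int \<times> int"
    obtain m n where p: "p = (m, n)" by fastforce
    have "norm (theta_term (\<lambda>_ _. 1) x y (m, n)) \<le> (norm x * s) ^ (nat \<bar>m\<bar> + nat \<bar>n\<bar>)"
      using assms by (intro norm_theta_term_le) auto
    also have "\<dots> \<le> (1/2) ^ (nat \<bar>m\<bar> + nat \<bar>n\<bar>)"
      using one_le_of_norm_bounds[OF assms(1-3)] assms(4) by (intro power_mono) auto
    finally show "norm (theta_term (\<lambda>_ _. 1) x y p) \<le> norm (geometric_Z2 p)"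
      by (simp add: p geometric_Z2_def)
  qed
  thus ?thesis
    using summable_on_iff_abs_summable_on_complex by blast
qed

lemma norm_theta_sum_minus_one_le:
  assumes y: "y \<noteq> 0" "norm y \<le> s" "1 / norm y \<le> s" and xs: "norm x * s \<le> 1/2"
    and w: "\<And>m n. norm (w m n) \<le> 1" and w00: "w 0 0 = 1"
  shows "norm (infsum (theta_term w x y) UNIV - 1) \<le> 2 * (norm x * s) * infsum geometric_Z2 UNIV"
proof -
  let ?t = "norm x * s"
  have t0: "0 \<le> ?t"
    using one_le_of_norm_bounds[OF y] by simp
  define \<delta> :: "int \<times> int \<Rightarrow> complex" where "\<delta> p = (if p = (0, 0) then 1 else 0)" for p
  have "(\<delta> has_sum 1) UNIV"
    using has_sum_finiteI[of "{(0, 0)}" 1 \<delta>] has_sum_cong_neutral[of UNIV "{(0::int, 0::int)}" \<delta> \<delta>]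
    by (auto simp: \<delta>_def)
  moreover have "(theta_term w x y has_sum infsum (theta_term w x y) UNIV) UNIV"
    using theta_term_summable_weighted[OF theta_term_summable[OF y xs] w] by simp
  ultimately have diff: "((\<lambda>p. theta_term w x y p + - \<delta> p) has_sum (infsum (theta_term w x y) UNIV + - 1)) UNIV"
    by (intro has_sum_add has_sum_uminus[THEN iffD2]) auto
  have bound: "((\<lambda>p. 2 * ?t * geometric_Z2 p) has_sum (2 * ?t * infsum geometric_Z2 UNIV)) UNIV"
    by (intro has_sum_cmult_right) (simp add: geometric_Z2_summable)
  have "norm (infsum (theta_term w x y) UNIV + - 1) \<le> 2 * ?t * infsum geometric_Z2 UNIV"
  proof (rule norm_infsum_le[OF diff bound])
    fix p :: "int \<times> int"
    obtain m n where p: "p = (m, n)" by fastforce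
    show "norm (theta_term w x y p + - \<delta> p) \<le> 2 * ?t * geometric_Z2 p"
    proof (cases "p = (0, 0)")
      case True
      thus ?thesis
        using w00 t0 by (simp add: \<delta>_def theta_term_def qform_A2d_def geometric_Z2_def)
    next
      case False
      then obtain k where k: "nat \<bar>m\<bar> + nat \<bar>n\<bar> = Suc k"
        by (metis p add_is_0 nat_0_iff not0_implies_Suc abs_ge_zero abs_le_zero_iff order_refl prod.inject zero_less_nat_eq)
      have "norm (theta_term w x y (m, n)) \<le> ?t ^ (nat \<bar>m\<bar> + nat \<bar>n\<bar>)"
        using xs by (intro norm_theta_term_le[OF y] w) auto
      also have "\<dots> = ?t * ?t ^ k" by (simp add: k)
      also have "\<dots> \<le> ?t * (1/2) ^ k"
        using xs t0 by (intro mult_left_mono power_mono) auto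
      also have "\<dots> = 2 * ?t * geometric_Z2 p"
        by (simp add: p geometric_Z2_def k)
      finally show ?thesis
        using False by (auto simp: p \<delta>_def)
    qed
  qed
  thus ?thesis by simp
qed

lemma etabar_nonzero:
  fixes w :: complex
  assumes "norm w < 1"
  shows "etabar w \<noteq> 0"
proof -
  have "summable (\<lambda>i. norm w * norm w ^ i)"
    using assms by (intro summable_mult summable_geometric) simp
  hence "summable (\<lambda>i. norm ((1 - w ^ (i + 1)) - 1))"
    by (simp add: norm_power norm_mult norm_minus_commute)
  hence "convergent_prod (\<lambda>i. 1 - w ^ (i + 1))"
    by (intro abs_convergent_prod_imp_convergent_prod summable_imp_abs_convergent_prod)
  moreover have "1 - w ^ (i + 1) \<noteq> 0" for i
  proof
    assume "1 - w ^ (i + 1) = 0"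
    hence "norm (w ^ (i + 1)) = 1" by simp
    moreover have "norm (w ^ (i + 1)) < 1"
      unfolding norm_power using assms by (subst power_less_one_iff) auto
    ultimately show False by simp
  qed
  ultimately show ?thesis
    unfolding etabar_def by (rule prodinf_nonzero)
qed

lemma norm_mult_minus_one_le:
  fixes a b :: complex
  assumes "norm (a - 1) \<le> 1/10" "norm (b - 1) \<le> 1/10"
  shows "norm (a * b - 1) \<le> 21/100"
proof -
  have eq: "a * b - 1 = (a - 1) * (b - 1) + (a - 1) + (b - 1)"
    by (simp add: algebra_simps)
  have "norm (a * b - 1) \<le> norm ((a - 1) * (b - 1)) + norm (a - 1) + norm (b - 1)"
    unfolding eq using norm_triangle_ineq[of "(a - 1) * (b - 1) + (a - 1)" "b - 1"]
      norm_triangle_ineq[of "(a - 1) * (b - 1)" "a - 1"] by linarith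
  also have "\<dots> \<le> 1/10 * (1/10) + 1/10 + 1/10"
    unfolding norm_mult using assms by (intro add_mono mult_mono) auto
  finally show ?thesis by simp
qed

lemma quotient_add_three_quotient_nonzero:
  fixes a b c d :: complex
  assumes "norm (a - 1) \<le> 1/10" "norm (b - 1) \<le> 1/10" "norm (c - 1) \<le> 1/10" "norm (d - 1) \<le> 1/10"
  shows "a / b + 3 * (c / d) \<noteq> 0"
proof -
  have b: "b \<noteq> 0" and d: "d \<noteq> 0"
    using assms(2,4) by auto
  have "a * d + 3 * (c * b) - 4 = (a * d - 1) + 3 * (c * b - 1)"
    by (simp add: algebra_simps)
  moreover have "norm (3 * (c * b - 1)) = 3 * norm (c * b - 1)"
    by (simp only: norm_mult) simp
  ultimately have "norm (a * d + 3 * (c * b) - 4) \<le> norm (a * d - 1) + 3 * norm (c * b - 1)"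
    using norm_triangle_ineq[of "a * d - 1" "3 * (c * b - 1)"] by simp
  also have "\<dots> < 4"
    using norm_mult_minus_one_le[of a d] norm_mult_minus_one_le[of c b] assms by simp
  finally have "a * d + 3 * (c * b) \<noteq> 0" by auto
  moreover have "a / b + 3 * (c / d) = (a * d + 3 * (c * b)) / (b * d)"
    using b d by (simp add: field_simps)
  ultimately show ?thesis
    using b d by simp
qed

lemma theta_A2d_near_one:
  assumes y: "y \<noteq> 0" "norm y \<le> s" "1 / norm y \<le> s" and xs: "norm x * s \<le> 1/2"
    and small: "2 * (norm x * s) * infsum geometric_Z2 UNIV \<le> 1/10"
  shows "norm (theta_A2d_00 x y - 1) \<le> 1/10" and "norm (theta_A2d_01 x y - 1) \<le> 1/10"
proof -
  have near: "norm (infsum (theta_term w x y) UNIV - 1) \<le> 1/10"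
    if "\<And>m n. norm (w m n) \<le> 1" and "w 0 0 = 1" for w
    using norm_theta_sum_minus_one_le[where w = w, OF y xs that] small by linarith
  show "norm (theta_A2d_00 x y - 1) \<le> 1/10"
    unfolding theta_A2d_00_eq by (rule near) simp_all
  show "norm (theta_A2d_01 x y - 1) \<le> 1/10"
    unfolding theta_A2d_01_eq by (rule near) simp_all
qed

lemma theta_A2d_regular_near_0:
  fixes y :: complex
  assumes "y \<noteq> 0"
  obtains r where "0 < r" and "\<And>z. norm z < r \<Longrightarrow>
      theta_term (\<lambda>_ _. 1) z y summable_on UNIV \<and> theta_A2d_01 z y \<noteq> 0 \<and>
      Zfun z y + 3 * Zfun z 1 \<noteq> 0 \<and> etabar (z ^ 6) \<noteq> 0"
proof
  define s where "s = max (norm y) (1 / norm y)"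
  have y: "y \<noteq> 0" "norm y \<le> s" "1 / norm y \<le> s"
    using assms by (auto simp: s_def)
  have s1: "1 \<le> s"
    using y by (rule one_le_of_norm_bounds)
  have one: "(1::complex) \<noteq> 0" "norm (1::complex) \<le> s" "1 / norm (1::complex) \<le> s"
    using s1 by auto
  define C where "C = infsum geometric_Z2 UNIV"
  have C0: "0 \<le> C"
    unfolding C_def by (rule infsum_nonneg) (auto simp: geometric_Z2_def)
  show "0 < 1 / (20 * s * (C + 1))"
    using s1 C0 by simp
  fix z :: complex
  assume "norm z < 1 / (20 * s * (C + 1))"
  hence "norm z * s < 1 / (20 * s * (C + 1)) * s"
    using s1 by (intro mult_strict_right_mono) auto
  hence zs: "norm z * s \<le> 1 / (20 * (C + 1))"
    using s1 by simp
  moreover have "1 / (20 * (C + 1)) \<le> 1/2"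
    using C0 by (simp add: field_simps)
  ultimately have zs2: "norm z * s \<le> 1/2"
    by linarith
  have "2 * (norm z * s) * C \<le> 2 * (1 / (20 * (C + 1))) * C"
    using zs C0 by (intro mult_right_mono) auto
  also have "\<dots> \<le> 1/10"
    using C0 by (simp add: field_simps)
  finally have small: "2 * (norm z * s) * infsum geometric_Z2 UNIV \<le> 1/10"
    unfolding C_def .
  note near_y = theta_A2d_near_one[OF y zs2 small] and near_1 = theta_A2d_near_one[OF one zs2 small]
  have "theta_A2d_01 z y \<noteq> 0"
    using near_y(2) by auto
  moreover have "Zfun z y + 3 * Zfun z 1 \<noteq> 0"
    unfolding Zfun_def using near_y near_1 by (rule quotient_add_three_quotient_nonzero)
  moreover have "etabar (z ^ 6) \<noteq> 0"
  proof (rule etabar_nonzero)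
    have "norm z \<le> norm z * s"
      using s1 by (simp add: mult_le_cancel_left1)
    thus "norm (z ^ 6) < 1"
      using zs2 by (simp add: norm_power power_less_one_iff)
  qed
  ultimately show "theta_term (\<lambda>_ _. 1) z y summable_on UNIV \<and> theta_A2d_01 z y \<noteq> 0 \<and>
      Zfun z y + 3 * Zfun z 1 \<noteq> 0 \<and> etabar (z ^ 6) \<noteq> 0"
    using theta_term_summable[OF y zs2] by simp
qed

text \<open>Summing the twisted series against the characters of Z/3 cuts out the cosets of the
  index-3 sublattice m = n (mod 3).\<close>
lemma theta_A2d_coset_sum:
  assumes sum: "theta_term (\<lambda>_ _. 1) x y summable_on UNIV"
  shows "theta_A2d_00 x y + eps powi (- r) * theta_A2d_01 x y + eps powi r * theta_A2d_01 x y
       = 3 * infsum (theta_term (\<lambda>_ _. 1) x y) {p. (fst p - snd p) mod 3 = r mod 3}"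
proof -
  let ?t0 = "theta_term (\<lambda>_ _. 1) x y"
  let ?t1 = "theta_term (\<lambda>m n. eps powi (m - n)) x y"
  let ?t2 = "theta_term (\<lambda>m n. eps powi (n - m)) x y"
  let ?P = "\<lambda>p::int \<times> int. (fst p - snd p) mod 3 = r mod 3"
  have sum1: "?t1 summable_on UNIV" and sum2: "?t2 summable_on UNIV"
    using sum by (auto intro: theta_term_summable_weighted)
  have pointwise: "?t0 p + eps powi (- r) * ?t1 p + eps powi r * ?t2 p = (if ?P p then 3 * ?t0 p else 0)" for p
  proof -
    obtain m n where p: "p = (m, n)" by fastforce
    have e1: "eps powi (- r) * eps powi (m - n) = eps powi (m - n - r)"
    proof -
      have "m - n - r = - r + (m - n)" by simp
      thus ?thesis by (simp only:) (rule power_int_add[symmetric], simp)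
    qed
    have e2: "eps powi r * eps powi (n - m) = eps powi (- (m - n - r))"
    proof -
      have "- (m - n - r) = r + (n - m)" by simp
      thus ?thesis by (simp only:) (rule power_int_add[symmetric], simp)
    qed
    have "?t0 p + eps powi (- r) * ?t1 p + eps powi r * ?t2 p
        = (1 + eps powi (- r) * eps powi (m - n) + eps powi r * eps powi (n - m)) * ?t0 p"
      by (simp add: p theta_term_def algebra_simps)
    also have "\<dots> = (1 + eps powi (m - n - r) + eps powi (- (m - n - r))) * ?t0 p"
      unfolding e1 e2 ..
    also have "\<dots> = (if ?P p then 3 * ?t0 p else 0)"
      unfolding eps_character_sum by (simp add: p mod_eq_dvd_iff dvd_eq_mod_eq_0[symmetric] algebra_simps)
    finally show ?thesis .
  qed
  have "theta_A2d_00 x y + eps powi (- r) * theta_A2d_01 x y + eps powi r * theta_A2d_01 x y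
      = infsum ?t0 UNIV + eps powi (- r) * infsum ?t1 UNIV + eps powi r * infsum ?t2 UNIV"
    by (simp only: theta_A2d_00_eq theta_A2d_01_eq theta_A2d_01_swap)
  also have "\<dots> = infsum (\<lambda>p. ?t0 p + eps powi (- r) * ?t1 p + eps powi r * ?t2 p) UNIV"
    using sum sum1 sum2
    by (simp add: infsum_add summable_on_add summable_on_cmult_right infsum_cmult_right)
  also have "\<dots> = infsum (\<lambda>p. if ?P p then 3 * ?t0 p else 0) UNIV"
    by (simp only: pointwise)
  also have "\<dots> = infsum (\<lambda>p. 3 * ?t0 p) {p. ?P p}"
    by (rule infsum_cong_neutral) auto
  also have "\<dots> = 3 * infsum ?t0 {p. ?P p}"
    by (intro infsum_cmult_right summable_on_subset[OF sum]) simp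
  finally show ?thesis .
qed

text \<open>The map (p, q) \<mapsto> (2p - q, 2q - p) identifies Z^2 with the sublattice m = n (mod 3)
  and scales the form p^2 - pq + q^2 by 3.\<close>
lemma theta_A2_00_cube_eq:
  "theta_A2_00 (x ^ 3) y = infsum (theta_term (\<lambda>_ _. 1) x y) {p. (fst p - snd p) mod 3 = 0}"
  unfolding theta_A2_00_def
proof (rule infsum_reindex_bij_witness[where i="\<lambda>(m, n). ((2*m + n) div 3, (m + 2*n) div 3)"
      and j="\<lambda>(p, q). (2*p - q, 2*q - p)"])
  fix a :: "int \<times> int"
  assume "a \<in> {p. (fst p - snd p) mod 3 = 0}"
  then obtain n t where a: "a = (n + 3 * t, n)"
    by (cases a) (auto simp: mod_eq_0_iff_dvd algebra_simps)
  show "(\<lambda>(p, q). (2*p - q, 2*q - p)) ((\<lambda>(m, n). ((2*m + n) div 3, (m + 2*n) div 3)) a) = a"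
    by (simp add: a algebra_simps)
next
  fix b :: "int \<times> int"
  obtain p q where b: "b = (p, q)" by fastforce
  show "(\<lambda>(m, n). ((2*m + n) div 3, (m + 2*n) div 3)) ((\<lambda>(p, q). (2*p - q, 2*q - p)) b) = b"
    by (simp add: b algebra_simps)
  show "(\<lambda>(p, q). (2*p - q, 2*q - p)) b \<in> {p. (fst p - snd p) mod 3 = 0}"
    by (simp add: b algebra_simps)
  have "2 * qform_A2d (2*p - q) (2*q - p) = 3 * (2 * (p\<^sup>2 - p*q + q\<^sup>2))"
    by (simp add: qform_A2d_def power2_eq_square algebra_simps)
  hence "nat (2 * qform_A2d (2*p - q) (2*q - p)) = 3 * nat (2 * (p\<^sup>2 - p*q + q\<^sup>2))"
    by (simp only: nat_mult_distrib) simp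
  hence "x ^ nat (2 * qform_A2d (2*p - q) (2*q - p)) = (x ^ 3) ^ nat (2 * (p\<^sup>2 - p*q + q\<^sup>2))"
    by (simp only: power_mult)
  thus "theta_term (\<lambda>_ _. 1) x y ((\<lambda>(p, q). (2*p - q, 2*q - p)) b)
      = (\<lambda>(m, n). (x ^ 3) ^ nat (2 * (m\<^sup>2 - m * n + n\<^sup>2)) * y powi (m + n)) b"
    by (simp add: b theta_term_def add.commute)
qed auto

text \<open>The same map, shifted by (1, -1), identifies Z^2 with the coset m - n = 2 (mod 3).\<close>
lemma theta_A2_10_cube_eq:
  "theta_A2_10_cube x y = infsum (theta_term (\<lambda>_ _. 1) x y) {p. (fst p - snd p) mod 3 = 2}"
  unfolding theta_A2_10_cube_def
proof (rule infsum_reindex_bij_witness[where i="\<lambda>(m, n). ((2*m + n - 1) div 3, (m + 2*n + 1) div 3)"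
      and j="\<lambda>(p, q). (2*p - q + 1, 2*q - p - 1)"])
  fix a :: "int \<times> int"
  assume "a \<in> {p. (fst p - snd p) mod 3 = 2}"
  then obtain m n where "a = (m, n)" and d: "(m - n) mod 3 = 2"
    by (cases a) auto
  moreover have "m = n + 3 * ((m - n) div 3) + 2"
    using div_mult_mod_eq[of "m - n" 3] d by linarith
  ultimately obtain t where a: "a = (n + 3 * t + 2, n)"
    by metis
  show "(\<lambda>(p, q). (2*p - q + 1, 2*q - p - 1)) ((\<lambda>(m, n). ((2*m + n - 1) div 3, (m + 2*n + 1) div 3)) a) = a"
    by (simp add: a algebra_simps)
next
  fix b :: "int \<times> int"
  obtain p q where b: "b = (p, q)" by fastforce
  show "(\<lambda>(m, n). ((2*m + n - 1) div 3, (m + 2*n + 1) div 3)) ((\<lambda>(p, q). (2*p - q + 1, 2*q - p - 1)) b) = b"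
    by (simp add: b algebra_simps)
  have "(2*p - q + 1 - (2*q - p - 1)) mod 3 = 2"
    by presburger
  thus "(\<lambda>(p, q). (2*p - q + 1, 2*q - p - 1)) b \<in> {p. (fst p - snd p) mod 3 = 2}"
    by (simp add: b)
  have "2 * qform_A2d (2*p - q + 1) (2*q - p - 1) = 6 * (p\<^sup>2 - p*q + q\<^sup>2 + p - q) + 2"
    by (simp add: qform_A2d_def power2_eq_square algebra_simps)
  thus "theta_term (\<lambda>_ _. 1) x y ((\<lambda>(p, q). (2*p - q + 1, 2*q - p - 1)) b)
      = (\<lambda>(m, n). x ^ nat (6 * (m\<^sup>2 - m*n + n\<^sup>2 + m - n) + 2) * y powi (m + n)) b"
    by (simp add: b theta_term_def add.commute)
qed auto

lemma theta_A2d_blowup_combination: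
  assumes "theta_term (\<lambda>_ _. 1) x y summable_on UNIV" and "l \<le> 2"
  shows "theta_A2d_00 x y + (eps powi int l + eps powi (- int l)) * theta_A2d_01 x y
       = 3 * (if l = 0 then theta_A2_00 (x ^ 3) y else theta_A2_10_cube x y)"
proof (cases "l = 0")
  case True
  thus ?thesis
    using theta_A2d_coset_sum[OF assms(1), of 0] by (simp add: theta_A2_00_cube_eq add.commute)
next
  case False
  hence "eps powi int l + eps powi (- int l) = eps powi (- 2) + eps powi 2"
    using assms(2) eps_powi_add_uminus[of "int l"] eps_powi_add_uminus[of 2] by (simp add: add.commute)
  thus ?thesis
    using False theta_A2d_coset_sum[OF assms(1), of 2] by (simp add: theta_A2_10_cube_eq distrib_right add.assoc)
qed

definition psi_summand :: "('a::ab_group_add \<Rightarrow> 'a \<Rightarrow> int) \<Rightarrow> 'a \<Rightarrow> ('a \<Rightarrow> int)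
    \<Rightarrow> complex \<Rightarrow> complex \<Rightarrow> 'a \<Rightarrow> 'a \<Rightarrow> 'a \<Rightarrow> complex" where
  "psi_summand B K SW p q c a b =
     of_int (SW a * SW b) * eps powi (B (a - b) c) * p powi (B a b) * q powi (B (K - a) (K - b))"

lemma psi_eq_sum_psi_summand:
  "psi B K chi SW Zp Zm c x y =
     9 * (pref_chi x y) powi chi * (theta_A2d_01 x y / (3 * (etabar (x ^ 6)) ^ 3)) powi (- B K K)
     * (\<Sum>a\<in>{a. SW a \<noteq> 0}. \<Sum>b\<in>{b. SW b \<noteq> 0}. psi_summand B K SW (Zp x y) (Zm x y) c a b)"
  unfolding psi_def psi_summand_def ..

lemma blowup_psi_summand:
  assumes p: "p \<noteq> 0" and q: "q \<noteq> 0" and ij: "i \<in> {0, 1}" "j \<in> {0, 1}"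
  shows "psi_summand (blowup_form B) (K, 1) (blowup_SW SW) p q (c, k) (a, i) (b, j)
     = psi_summand B K SW p q c a b
       * (if i = 0 \<and> j = 0 then inverse q else if i = 1 \<and> j = 1 then inverse p
          else if i = 0 then eps powi k else eps powi (- k))"
proof -
  have SW: "blowup_SW SW (a, i) = SW a" "blowup_SW SW (b, j) = SW b"
    using ij by (auto simp: blowup_SW_def)
  have "psi_summand (blowup_form B) (K, 1) (blowup_SW SW) p q (c, k) (a, i) (b, j)
      = of_int (SW a * SW b) * eps powi (B (a - b) c - (i - j) * k) * p powi (B a b - i * j)
        * q powi (B (K - a) (K - b) - (1 - i) * (1 - j))"
    by (simp add: psi_summand_def blowup_form_def SW)
  also have "\<dots> = psi_summand B K SW p q c a b
       * (if i = 0 \<and> j = 0 then inverse q else if i = 1 \<and> j = 1 then inverse p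
          else if i = 0 then eps powi k else eps powi (- k))"
    using ij p q by (auto simp: psi_summand_def power_int_diff power_int_add power_int_minus divide_inverse mult_ac)
  finally show ?thesis .
qed

lemma psi_blowup:
  assumes p: "Zp x y \<noteq> 0" and q: "Zm x y \<noteq> 0" and X: "theta_A2d_01 x y / (3 * etabar (x ^ 6) ^ 3) \<noteq> 0"
  shows "psi (blowup_form B) (K, 1) chi (blowup_SW SW) Zp Zm (c, k) x y
    = psi B K chi SW Zp Zm c x y * (theta_A2d_01 x y / (3 * etabar (x ^ 6) ^ 3))
      * (inverse (Zp x y) + inverse (Zm x y) + eps powi k + eps powi (- k))"
proof -
  define A where "A = {a. SW a \<noteq> 0}"
  define S where "S = inverse (Zp x y) + inverse (Zm x y) + eps powi k + eps powi (- k)"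
  let ?F = "psi_summand B K SW (Zp x y) (Zm x y) c"
  let ?G = "psi_summand (blowup_form B) (K, 1) (blowup_SW SW) (Zp x y) (Zm x y) (c, k)"
  have support: "{u. blowup_SW SW u \<noteq> 0} = A \<times> {0, 1}"
    by (auto simp: blowup_SW_def A_def split: if_splits)
  have fibre: "(\<Sum>i\<in>{0, 1}. \<Sum>j\<in>{0, 1}. ?G (a, i) (b, j)) = ?F a b * S" for a b
    by (simp add: blowup_psi_summand[OF p q] S_def algebra_simps)
  have "(\<Sum>u\<in>A \<times> {0, 1}. \<Sum>v\<in>A \<times> {0, 1}. ?G u v)
      = (\<Sum>a\<in>A. \<Sum>b\<in>A. \<Sum>i\<in>{0, 1}. \<Sum>j\<in>{0, 1}. ?G (a, i) (b, j))"
    by (simp only: sum.cartesian_product' sum.swap[of _ "{0, 1}" A])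
  also have "\<dots> = (\<Sum>a\<in>A. \<Sum>b\<in>A. ?F a b) * S"
    by (simp only: fibre sum_distrib_right)
  finally have sums: "(\<Sum>u\<in>A \<times> {0, 1}. \<Sum>v\<in>A \<times> {0, 1}. ?G u v) = (\<Sum>a\<in>A. \<Sum>b\<in>A. ?F a b) * S" .
  let ?X = "theta_A2d_01 x y / (3 * etabar (x ^ 6) ^ 3)"
  have "- blowup_form B (K, 1) (K, 1) = - B K K + 1"
    by (simp add: blowup_form_def)
  hence "?X powi (- blowup_form B (K, 1) (K, 1)) = ?X powi (- B K K) * ?X powi 1"
    using X by (simp only:) (rule power_int_add, simp)
  thus ?thesis
    unfolding psi_eq_sum_psi_summand support sums by (simp add: A_def S_def mult_ac)
qed

lemma inverse_add_inverse_eq_of_vieta: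
  fixes p q z s :: "'a::field"
  assumes "p + q = z * s" and "p * q = s" and "s \<noteq> 0"
  shows "p \<noteq> 0" and "q \<noteq> 0" and "inverse p + inverse q = z"
proof -
  show p: "p \<noteq> 0" and q: "q \<noteq> 0"
    using assms(2,3) by auto
  have "inverse p + inverse q = (p + q) / (p * q)"
    using p q by (simp add: field_simps)
  thus "inverse p + inverse q = z"
    using assms by simp
qed

lemma psi_blowup_theta:
  assumes roots: "roots_Zpm Zp Zm" and t01: "theta_A2d_01 x y \<noteq> 0" and eta: "etabar (x ^ 6) \<noteq> 0"
    and Zsum: "Zfun x y + 3 * Zfun x 1 \<noteq> 0"
  shows "psi (blowup_form B) (K, 1) chi (blowup_SW SW) Zp Zm (c, k) x y
    = psi B K chi SW Zp Zm c x y
      * ((theta_A2d_00 x y + (eps powi k + eps powi (- k)) * theta_A2d_01 x y) / (3 * etabar (x ^ 6) ^ 3))"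
proof -
  have "Zp x y + Zm x y = Zfun x y * (Zfun x y + 3 * Zfun x 1)" "Zp x y * Zm x y = Zfun x y + 3 * Zfun x 1"
    using roots unfolding roots_Zpm_def by (auto simp: power2_eq_square algebra_simps)
  note vieta = inverse_add_inverse_eq_of_vieta[OF this Zsum]
  have "psi (blowup_form B) (K, 1) chi (blowup_SW SW) Zp Zm (c, k) x y
      = psi B K chi SW Zp Zm c x y * ((theta_A2d_01 x y / (3 * etabar (x ^ 6) ^ 3))
        * (Zfun x y + eps powi k + eps powi (- k)))"
    using psi_blowup[where Zp = Zp and Zm = Zm and x = x and y = y, OF vieta(1,2)] t01 eta
    by (simp add: vieta(3) mult.assoc)
  also have "(theta_A2d_01 x y / (3 * etabar (x ^ 6) ^ 3)) * (Zfun x y + eps powi k + eps powi (- k))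
      = (theta_A2d_00 x y + (eps powi k + eps powi (- k)) * theta_A2d_01 x y) / (3 * etabar (x ^ 6) ^ 3)"
    using t01 eta by (simp add: Zfun_def field_simps)
  finally show ?thesis .
qed

lemma psi_blowup_eq:
  assumes "roots_Zpm Zp Zm" and "l \<le> 2" and "theta_term (\<lambda>_ _. 1) x y summable_on UNIV"
    and "theta_A2d_01 x y \<noteq> 0" and "etabar (x ^ 6) \<noteq> 0" and "Zfun x y + 3 * Zfun x 1 \<noteq> 0"
  shows "psi (blowup_form B) (K, 1) chi (blowup_SW SW) Zp Zm (c, - int l) x y
    = psi B K chi SW Zp Zm c x y
      * ((if l = 0 then theta_A2_00 (x ^ 3) y else theta_A2_10_cube x y) / etabar (x ^ 6) ^ 3)"
  using psi_blowup_theta[OF assms(1,4-6), of B K chi SW c "- int l"]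
    theta_A2d_blowup_combination[OF assms(3,2)]
  by (simp add: add.commute)

lemma theta_A2_00_cube_rotate: "theta_A2_00 ((eps ^ k * x) ^ 3) y = theta_A2_00 (x ^ 3) y"
proof -
  have "(eps ^ k * x) ^ 3 = (eps ^ 3) ^ k * x ^ 3"
    by (simp add: power_mult_distrib power_mult[symmetric] mult.commute)
  thus ?thesis by (simp add: eps_cube)
qed

lemma etabar_sixth_rotate: "etabar ((eps ^ k * x) ^ 6) = etabar (x ^ 6)"
proof -
  have "(eps ^ k * x) ^ 6 = ((eps ^ 3) ^ 2) ^ k * x ^ 6"
    by (simp add: power_mult_distrib power_mult[symmetric] mult.commute)
  thus ?thesis by (simp add: eps_cube)
qed

text \<open>Every exponent of the series is 2 mod 3.\<close>
lemma theta_A2_10_cube_rotate: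
  "theta_A2_10_cube (eps ^ k * x) y = eps ^ (2 * k) * theta_A2_10_cube x y"
proof -
  have rotated_term: "(eps ^ k * x) ^ nat (6 * (p\<^sup>2 - p * q + q\<^sup>2 + p - q) + 2)
      = eps ^ (2 * k) * x ^ nat (6 * (p\<^sup>2 - p * q + q\<^sup>2 + p - q) + 2)" for p q :: int
  proof -
    define v where "v = p\<^sup>2 - p * q + q\<^sup>2 + p - q"
    have "2 * qform_A2d (2*p - q + 1) (2*q - p - 1) = 6 * v + 2"
      by (simp add: v_def qform_A2d_def power2_eq_square algebra_simps)
    hence "0 \<le> v"
      using qform_A2d_nonneg[of "2*p - q + 1" "2*q - p - 1"] by linarith
    hence N: "nat (6 * v + 2) = 3 * nat (2 * v) + 2"
      by linarith
    have "(eps ^ k) ^ nat (6 * v + 2) = (eps ^ 3) ^ (k * nat (2 * v)) * eps ^ (2 * k)"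
      unfolding N by (simp add: power_mult[symmetric] power_add algebra_simps) (simp add: mult_2_right power_add)
    thus ?thesis
      unfolding v_def[symmetric] by (simp add: power_mult_distrib eps_cube)
  qed
  have "(\<lambda>(p, q). (eps ^ k * x) ^ nat (6 * (p\<^sup>2 - p * q + q\<^sup>2 + p - q) + 2) * y powi (p + q))
      = (\<lambda>pq. eps ^ (2 * k) * (\<lambda>(p, q). x ^ nat (6 * (p\<^sup>2 - p * q + q\<^sup>2 + p - q) + 2) * y powi (p + q)) pq)"
    by (intro ext) (clarsimp simp only: rotated_term mult.assoc)
  thus ?thesis
    unfolding theta_A2_10_cube_def by (simp add: infsum_cmult_right')
qed

text \<open>For l = 1, 2 the factor eps^(2k) produced by the rotation x \<mapsto> eps^k x is absorbed
  by the change -2l^2 = -2 (mod 3) of the exponent 2 c^2 in the definition of Zinst.\<close>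
lemma eps_powi_blowup_exponent:
  fixes l k :: nat
  assumes "l = 1 \<or> l = 2"
  shows "eps powi (int k * (2 * (b - int l * int l) + 8 * c)) * eps ^ (2 * k)
       = eps powi (int k * (2 * b + 8 * c))"
proof -
  have "eps powi (int k * (2 * (b - int l * int l) + 8 * c)) * eps ^ (2 * k)
      = eps powi (int k * (2 * (b - int l * int l) + 8 * c) + 2 * int k)"
    by (simp add: power_int_add power_int_of_nat[symmetric])
  also have "\<dots> = eps powi (int k * (2 * b + 8 * c))"
  proof (rule eps_powi_cong)
    have "3 dvd (1 - int l * int l)"
      using assms by auto
    moreover have "int k * (2 * (b - int l * int l) + 8 * c) + 2 * int k - int k * (2 * b + 8 * c)
        = 2 * int k * (1 - int l * int l)"
      by (simp add: algebra_simps)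
    ultimately show "(int k * (2 * (b - int l * int l) + 8 * c) + 2 * int k) mod 3
        = (int k * (2 * b + 8 * c)) mod 3"
      by (simp add: mod_eq_dvd_iff)
  qed
  finally show ?thesis .
qed

lemma blowup_Zinst_summand:
  fixes B :: "'a::ab_group_add \<Rightarrow> 'a \<Rightarrow> int" and l k :: nat
  assumes roots: "roots_Zpm Zp Zm" and l: "l \<le> 2" and z: "z = eps ^ k * x"
    and regular: "theta_term (\<lambda>_ _. 1) z y summable_on UNIV" "theta_A2d_01 z y \<noteq> 0"
      "etabar (z ^ 6) \<noteq> 0" "Zfun z y + 3 * Zfun z 1 \<noteq> 0"
  shows "eps powi (int k * (2 * blowup_form B (c, - int l) (c, - int l) + 8 * chi))
         * psi (blowup_form B) (K, 1) chi (blowup_SW SW) Zp Zm (c, - int l) z y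
       = (if l = 0 then theta_A2_00 (x ^ 3) y / etabar (x ^ 6) ^ 3
          else theta_A2_10_cube x y / etabar (x ^ 6) ^ 3)
         * (eps powi (int k * (2 * B c c + 8 * chi)) * psi B K chi SW Zp Zm c z y)"
proof -
  have eta: "etabar (z ^ 6) = etabar (x ^ 6)"
    unfolding z by (rule etabar_sixth_rotate)
  have theta00: "theta_A2_00 (z ^ 3) y = theta_A2_00 (x ^ 3) y"
    unfolding z by (rule theta_A2_00_cube_rotate)
  have theta10: "theta_A2_10_cube z y = eps ^ (2 * k) * theta_A2_10_cube x y"
    unfolding z by (rule theta_A2_10_cube_rotate)
  have form: "blowup_form B (c, - int l) (c, - int l) = B c c - int l * int l"
    by (simp add: blowup_form_def)
  note psi_z = psi_blowup_eq[OF roots l regular, of B K chi SW c]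
  show ?thesis
  proof (cases "l = 0")
    case True
    thus ?thesis
      using psi_z unfolding form by (simp add: eta theta00 mult_ac)
  next
    case False
    hence "eps powi (int k * (2 * (B c c - int l * int l) + 8 * chi)) * eps ^ (2 * k)
        = eps powi (int k * (2 * B c c + 8 * chi))"
      using l by (intro eps_powi_blowup_exponent) auto
    thus ?thesis
      using False psi_z unfolding form by (simp add: eta theta10 mult_ac)
  qed
qed

theorem mainTheorem7:
  fixes B :: "'a::ab_group_add \<Rightarrow> 'a \<Rightarrow> int"
    and K c1 :: 'a and chi :: int and SW :: "'a \<Rightarrow> int" and l :: nat
    and Zp Zm :: "complex \<Rightarrow> complex \<Rightarrow> complex"
  assumes "intersection_form B"
    and "finite {a. SW a \<noteq> 0}"
    and "l \<le> 2"
    and "roots_Zpm Zp Zm"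
  shows "\<forall>y::complex. y \<noteq> 0 \<longrightarrow> (\<exists>r>0. \<forall>x::complex. norm x < r \<longrightarrow>
     Zinst (blowup_form B) (K, 1) chi (blowup_SW SW) Zp Zm (c1, - int l) x y =
       (if l = 0 then theta_A2_00 (x ^ 3) y / (etabar (x ^ 6)) ^ 3
        else theta_A2_10_cube x y / (etabar (x ^ 6)) ^ 3)
       * Zinst B K chi SW Zp Zm c1 x y)"
proof (intro allI impI)
  fix y :: complex
  assume "y \<noteq> 0"
  then obtain r where "0 < r" and regular: "\<And>z. norm z < r \<Longrightarrow>
      theta_term (\<lambda>_ _. 1) z y summable_on UNIV \<and> theta_A2d_01 z y \<noteq> 0 \<and>
      Zfun z y + 3 * Zfun z 1 \<noteq> 0 \<and> etabar (z ^ 6) \<noteq> 0"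
    using theta_A2d_regular_near_0 by blast
  show "\<exists>r>0. \<forall>x::complex. norm x < r \<longrightarrow>
     Zinst (blowup_form B) (K, 1) chi (blowup_SW SW) Zp Zm (c1, - int l) x y =
       (if l = 0 then theta_A2_00 (x ^ 3) y / (etabar (x ^ 6)) ^ 3
        else theta_A2_10_cube x y / (etabar (x ^ 6)) ^ 3)
       * Zinst B K chi SW Zp Zm c1 x y"
  proof (intro exI[of _ r] conjI allI impI \<open>0 < r\<close>)
    fix x :: complex
    assume "norm x < r"
    hence "norm (eps ^ k * x) < r" for k
      by (simp add: norm_mult norm_power)
    with regular have "eps powi (int k * (2 * blowup_form B (c1, - int l) (c1, - int l) + 8 * chi))
         * psi (blowup_form B) (K, 1) chi (blowup_SW SW) Zp Zm (c1, - int l) (eps ^ k * x) y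
       = (if l = 0 then theta_A2_00 (x ^ 3) y / etabar (x ^ 6) ^ 3
          else theta_A2_10_cube x y / etabar (x ^ 6) ^ 3)
         * (eps powi (int k * (2 * B c1 c1 + 8 * chi)) * psi B K chi SW Zp Zm c1 (eps ^ k * x) y)" for k
      using assms(3,4) by (intro blowup_Zinst_summand) auto
    thus "Zinst (blowup_form B) (K, 1) chi (blowup_SW SW) Zp Zm (c1, - int l) x y =
       (if l = 0 then theta_A2_00 (x ^ 3) y / (etabar (x ^ 6)) ^ 3
        else theta_A2_10_cube x y / (etabar (x ^ 6)) ^ 3)
       * Zinst B K chi SW Zp Zm c1 x y"
      unfolding Zinst_def by (simp add: sum_distrib_left mult_ac)
  qed
qed

end
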